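(* Assume the setting in the context. Let $x_i, x_j, x_{k_1},\dots,x_{k_m}\in X$ be distinct and $K=\{x_{k_1},\dots,x_{k_m}\}$. Suppose that: (a) for every $q=1,\dots,m$: for all $M\subseteq X\setminus\{x_i,x_{k_q}\}$, $N\subseteq X\setminus\{x_j,x_{k_q}\}$ and $G_1,G_2\in\mathcal G$, $x_i-G_1(M)\not\perp\!\!\!\perp x_j-G_2(N)$; and (d) there exist $Q_1,Q_2\subseteq K$ with $Q_1\cup Q_2=K$, $G_1,G_2\in\mathcal G$ and $M,N\subseteq X\setminus(\{x_i,x_j\}\cup K)$ such that $x_i-G_1(M\cup Q_1)\perp\!\!\!\perp x_j-G_2(N\cup Q_2)$. Then $(x_i,x_j)$ is a visible non-edge (w.r.t. $X$), and each $x_{k_q}$ is a parent of $x_i$ or a parent of $x_j$.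
   Context: Model: $X$ is a finite set of observed random variables and $U$ a finite set of unobserved random variables; $V=X\cup U$ and $G=(V,E)$ is a DAG on $V$. Each $v_i\in V$ satisfies $v_i=\sum_{x_j\in \mathrm{pa}(v_i)\cap X} f^{(i)}_j(x_j)+\sum_{u_k\in\mathrm{pa}(v_i)\cap U} f^{(i)}_k(u_k)+n_i$, where the $f$'s are nonlinear functions and the external noises $n_i$ are jointly independent. "Parent", "ancestor", "path", "d-separation" refer to $G$ (a path has distinct vertices). Causal Faithfulness Condition (CFC): any conditional independence among variables of $V$ that is not entailed by d-separation in $G$ does not hold. $\perp\!\!\!\perp$ denotes statistical independence, $\not\perp\!\!\!\perp$ dependence. Function class: $\mathcal G$ is a class of generalized additive functions: for $G\in\mathcal G$ and a set $M$ of observed variables, $G(M)=\sum_{x_m\in M} g_m(x_m)$ (with $G(\emptyset)=0$). It satisfies: for any $x_i,x_j\in X$, sets $M,N\subseteq X$, $G_1,G_2\in\mathcal G$ and external noise $n_k$, if $n_k\not\perp\!\!\!\perp x_i-G_1(M)$ and $n_k\not\perp\!\!\!\perp x_j-G_2(N)$ then $x_i-G_1(M)\not\perp\!\!\!\perp x_j-G_2(N)$. Definitions, for $X'\subseteq X$ and $x_i,x_j\in X'$: an unobserved causal path (UCP) from $x_i$ to $x_j$ w.r.t. $X'$ is a directed path $x_i\to\cdots\to v_k\to x_j$ in $G$ with $v_k\notin X'$; an unobserved backdoor path (UBP) between $x_i$ and $x_j$ w.r.t. $X'$ is a path $x_i\leftarrow v_k\leftarrow\cdots\leftarrow v\to\cdots\to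 v_l\to x_j$ with $v_k,v_l\notin X'$ (allowing $v=v_k$, $v=v_l$, or $v=v_k=v_l$; $v$ may be in $X'$). "UBP/UCP between $x_i$ and $x_j$" means a UBP or a UCP in either direction. $x_j$ is a visible parent of $x_i$ w.r.t. $X'$ if $x_j$ is a parent of $x_i$ and there is no UBP/UCP between them w.r.t. $X'$; $(x_i,x_j)$ is a visible non-edge w.r.t. $X'$ if there is no edge between them and no UBP/UCP between them w.r.t. $X'$; $(x_i,x_j)$ is invisible w.r.t. $X'$ if there is a UBP/UCP between them w.r.t. $X'$. When $X'$ is omitted, $X'=X$. Standing facts (taken as known), for $X'\subseteq X$ and distinct $x_i,x_j\in X'$: (F1) $x_j$ is a visible parent of $x_i$ w.r.t. $X'$ iff [for all $G_1,G_2\in\mathcal G$, $M\subseteq X'\setminus\{x_i,x_j\}$, $N\subseteq X'\setminus\{x_j\}$: $x_i-G_1(M)\not\perp\!\!\!\perp x_j-G_2(N)$] and [there exist $G_1,G_2\in\mathcal G$, $M\subseteq X'\setminus\{x_i\}$, $N\subseteq X'\setminus\{x_i,x_j\}$ with $x_i-G_1(M)\perp\!\!\!\perp x_j-G_2(N)$]. (F2) $(x_i,x_j)$ is a visible non-edge w.r.t. $X'$ iff there exist $G_1,G_2\in\mathcal G$ and $M,N\subseteq X'\setminus\{x_i,x_j\}$ with $x_i-G_1(M)\perp\!\!\!\perp x_j-G_2(N)$. (F3) $(x_i,x_j)$ is invisible w.r.t. $X'$ iff for all $M\subseteq X'\setminus\{x_i\}$, $N\subseteq X'\setminus\{x_j\}$,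 $G_1,G_2\in\mathcal G$: $x_i-G_1(M)\not\perp\!\!\!\perp x_j-G_2(N)$. *)

theory Defs
  imports "HOL-Probability.Probability"
begin

definition is_dag :: "'v set \<Rightarrow> ('v \<times> 'v) set \<Rightarrow> bool" where
  "is_dag V E \<longleftrightarrow> finite V \<and> E \<subseteq> V \<times> V \<and> acyclic E"

definition parents :: "('v \<times> 'v) set \<Rightarrow> 'v \<Rightarrow> 'v set" where
  "parents E v = {u. (u, v) \<in> E}"

definition dpath :: "('v \<times> 'v) set \<Rightarrow> 'v list \<Rightarrow> bool" where
  "dpath E p \<longleftrightarrow> p \<noteq> [] \<and> distinct p \<and> (\<forall>t. Suc t < length p \<longrightarrow> (p!t, p!Suc t) \<in> E)"

definition upath :: "('v \<times> 'v) set \<Rightarrow> 'v list \<Rightarrow> bool" where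
  "upath E p \<longleftrightarrow> p \<noteq> [] \<and> distinct p \<and>
     (\<forall>t. Suc t < length p \<longrightarrow> (p!t, p!Suc t) \<in> E \<or> (p!Suc t, p!t) \<in> E)"

definition collider :: "('v \<times> 'v) set \<Rightarrow> 'v list \<Rightarrow> nat \<Rightarrow> bool" where
  "collider E p t \<longleftrightarrow> 0 < t \<and> Suc t < length p \<and> (p!(t-1), p!t) \<in> E \<and> (p!Suc t, p!t) \<in> E"

definition descendants :: "('v \<times> 'v) set \<Rightarrow> 'v \<Rightarrow> 'v set" where
  "descendants E w = {d. (w, d) \<in> E\<^sup>*}"

definition blocked :: "('v \<times> 'v) set \<Rightarrow> 'v set \<Rightarrow> 'v list \<Rightarrow> bool" where
  "blocked E C p \<longleftrightarrow> (\<exists>t. 0 < t \<and> Suc t < length p \<and>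
     (if collider E p t then descendants E (p!t) \<inter> C = {} else p!t \<in> C))"

definition d_separated :: "('v \<times> 'v) set \<Rightarrow> 'v set \<Rightarrow> 'v set \<Rightarrow> 'v set \<Rightarrow> bool" where
  "d_separated E A B C \<longleftrightarrow>
     (\<forall>p. upath E p \<and> hd p \<in> A \<and> last p \<in> B \<longrightarrow> blocked E C p)"

text \<open>UCP from xi to xj w.r.t. X': xi -> ... -> vk -> xj with vk not in X'.\<close>
definition UCP :: "('v \<times> 'v) set \<Rightarrow> 'v set \<Rightarrow> 'v \<Rightarrow> 'v \<Rightarrow> bool" where
  "UCP E X' xi xj \<longleftrightarrow> (\<exists>p. dpath E p \<and> hd p = xi \<and> last p = xj \<and> 2 \<le> length p \<and>
       p ! (length p - 2) \<notin> X')"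

text \<open>UBP between xi and xj w.r.t. X': xi <- vk <- ... <- v -> ... -> vl -> xj,
  vk, vl not in X', all vertices distinct (v = vk, v = vl allowed).\<close>
definition UBP :: "('v \<times> 'v) set \<Rightarrow> 'v set \<Rightarrow> 'v \<Rightarrow> 'v \<Rightarrow> bool" where
  "UBP E X' xi xj \<longleftrightarrow> (\<exists>p q. dpath E p \<and> dpath E q \<and> hd p = hd q \<and>
       last p = xi \<and> last q = xj \<and> 2 \<le> length p \<and> 2 \<le> length q \<and>
       set p \<inter> set q = {hd p} \<and>
       p ! (length p - 2) \<notin> X' \<and> q ! (length q - 2) \<notin> X')"

definition invisible :: "('v \<times> 'v) set \<Rightarrow> 'v set \<Rightarrow> 'v \<Rightarrow> 'v \<Rightarrow> bool" where
  "invisible E X' xi xj \<longleftrightarrow>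
     UBP E X' xi xj \<or> UBP E X' xj xi \<or> UCP E X' xi xj \<or> UCP E X' xj xi"

definition visible_parent :: "('v \<times> 'v) set \<Rightarrow> 'v set \<Rightarrow> 'v \<Rightarrow> 'v \<Rightarrow> bool" where
  "visible_parent E X' xj xi \<longleftrightarrow> (xj, xi) \<in> E \<and> \<not> invisible E X' xi xj"

definition visible_non_edge :: "('v \<times> 'v) set \<Rightarrow> 'v set \<Rightarrow> 'v \<Rightarrow> 'v \<Rightarrow> bool" where
  "visible_non_edge E X' xi xj \<longleftrightarrow>
     (xi, xj) \<notin> E \<and> (xj, xi) \<notin> E \<and> \<not> invisible E X' xi xj"

definition nonlinear :: "(real \<Rightarrow> real) \<Rightarrow> bool" where
  "nonlinear \<phi> \<longleftrightarrow> \<not> (\<exists>a b. \<forall>x. \<phi> x = a * x + b)"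

text \<open>Xv v is the random variable v, nz v its external noise, f i j the function f^(i)_j.\<close>
definition additive_sem ::
  "'a measure \<Rightarrow> 'v set \<Rightarrow> ('v \<times> 'v) set \<Rightarrow> ('v \<Rightarrow> 'a \<Rightarrow> real) \<Rightarrow> ('v \<Rightarrow> 'a \<Rightarrow> real)
    \<Rightarrow> ('v \<Rightarrow> 'v \<Rightarrow> real \<Rightarrow> real) \<Rightarrow> bool" where
  "additive_sem M V E Xv nz f \<longleftrightarrow>
     prob_space M \<and>
     (\<forall>i\<in>V. \<forall>j\<in>parents E i. f i j \<in> borel_measurable borel \<and> nonlinear (f i j)) \<and>
     (\<forall>i\<in>V. nz i \<in> borel_measurable M) \<and>
     prob_space.indep_vars M (\<lambda>_. borel) nz V \<and>
     (\<forall>i\<in>V. \<forall>\<omega>\<in>space M. Xv i \<omega> = (\<Sum>j\<in>parents E i. f i j (Xv j \<omega>)) + nz i \<omega>)"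

definition vec_of :: "('v \<Rightarrow> 'a \<Rightarrow> real) \<Rightarrow> 'v set \<Rightarrow> 'a \<Rightarrow> ('v \<Rightarrow> real)" where
  "vec_of Xv A \<omega> = restrict (\<lambda>a. Xv a \<omega>) A"

definition sigma_of :: "'a measure \<Rightarrow> ('v \<Rightarrow> 'a \<Rightarrow> real) \<Rightarrow> 'v set \<Rightarrow> 'a measure" where
  "sigma_of M Xv C = vimage_algebra (space M) (vec_of Xv C) (PiM C (\<lambda>_. (borel :: real measure)))"

definition event_of :: "'a measure \<Rightarrow> ('v \<Rightarrow> 'a \<Rightarrow> real) \<Rightarrow> 'v set \<Rightarrow> ('v \<Rightarrow> real) set \<Rightarrow> 'a set" where
  "event_of M Xv A S = vec_of Xv A -` S \<inter> space M"

definition cond_indep :: "'a measure \<Rightarrow> ('v \<Rightarrow> 'a \<Rightarrow> real) \<Rightarrow> 'v set \<Rightarrow> 'v set \<Rightarrow> 'v set \<Rightarrow> bool" where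
  "cond_indep M Xv A B C \<longleftrightarrow>
     (\<forall>S\<in>sets (PiM A (\<lambda>_. (borel :: real measure))). \<forall>T\<in>sets (PiM B (\<lambda>_. (borel :: real measure))).
        AE \<omega> in M.
          real_cond_exp M (sigma_of M Xv C) (indicator (event_of M Xv A S \<inter> event_of M Xv B T)) \<omega> =
          real_cond_exp M (sigma_of M Xv C) (indicator (event_of M Xv A S)) \<omega> *
          real_cond_exp M (sigma_of M Xv C) (indicator (event_of M Xv B T)) \<omega>)"

definition CFC :: "'a measure \<Rightarrow> 'v set \<Rightarrow> ('v \<times> 'v) set \<Rightarrow> ('v \<Rightarrow> 'a \<Rightarrow> real) \<Rightarrow> bool" where
  "CFC M V E Xv \<longleftrightarrow>
     (\<forall>A B C. A \<subseteq> V \<and> B \<subseteq> V \<and> C \<subseteq> V \<and> A \<inter> B = {} \<and> A \<inter> C = {} \<and> B \<inter> C = {} \<longrightarrow>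
        cond_indep M Xv A B C \<longrightarrow> d_separated E A B C)"

text \<open>An element g of the class assigns a function g m to every observed variable m;
  G(M) = sum over m in M of g m (x_m) (so G({}) = 0). resid M Xv x g N = x - G(N).\<close>
definition resid :: "('v \<Rightarrow> 'a \<Rightarrow> real) \<Rightarrow> 'v \<Rightarrow> ('v \<Rightarrow> real \<Rightarrow> real) \<Rightarrow> 'v set \<Rightarrow> 'a \<Rightarrow> real" where
  "resid Xv x g N \<omega> = Xv x \<omega> - (\<Sum>m\<in>N. g m (Xv m \<omega>))"

abbreviation indep_rv :: "'a measure \<Rightarrow> ('a \<Rightarrow> real) \<Rightarrow> ('a \<Rightarrow> real) \<Rightarrow> bool" where
  "indep_rv M Y Z \<equiv> prob_space.indep_var M borel Y borel Z"

definition gam_class ::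
  "'a measure \<Rightarrow> 'v set \<Rightarrow> 'v set \<Rightarrow> ('v \<Rightarrow> 'a \<Rightarrow> real) \<Rightarrow> ('v \<Rightarrow> 'a \<Rightarrow> real)
     \<Rightarrow> ('v \<Rightarrow> real \<Rightarrow> real) set \<Rightarrow> bool" where
  "gam_class M V X Xv nz \<G> \<longleftrightarrow>
     (\<forall>g\<in>\<G>. \<forall>m. g m \<in> borel_measurable borel) \<and>
     (\<forall>xi\<in>X. \<forall>xj\<in>X. \<forall>Ms N. \<forall>g1\<in>\<G>. \<forall>g2\<in>\<G>. \<forall>k\<in>V.
        Ms \<subseteq> X \<longrightarrow> N \<subseteq> X \<longrightarrow>
        \<not> indep_rv M (nz k) (resid Xv xi g1 Ms) \<longrightarrow>
        \<not> indep_rv M (nz k) (resid Xv xj g2 N) \<longrightarrow>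
        \<not> indep_rv M (resid Xv xi g1 Ms) (resid Xv xj g2 N))"

section \<open>Standing facts F1--F3 (taken as known in the paper's setting)\<close>

definition fact_F1 :: "'a measure \<Rightarrow> 'v set \<Rightarrow> ('v \<times> 'v) set \<Rightarrow> ('v \<Rightarrow> 'a \<Rightarrow> real)
     \<Rightarrow> ('v \<Rightarrow> real \<Rightarrow> real) set \<Rightarrow> bool" where
  "fact_F1 M X E Xv \<G> \<longleftrightarrow>
    (\<forall>X' \<subseteq> X. \<forall>xi\<in>X'. \<forall>xj\<in>X'. xi \<noteq> xj \<longrightarrow>
      (visible_parent E X' xj xi \<longleftrightarrow>
        (\<forall>g1\<in>\<G>. \<forall>g2\<in>\<G>. \<forall>Ms N. Ms \<subseteq> X' - {xi, xj} \<longrightarrow> N \<subseteq> X' - {xj} \<longrightarrow>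
            \<not> indep_rv M (resid Xv xi g1 Ms) (resid Xv xj g2 N)) \<and>
        (\<exists>g1\<in>\<G>. \<exists>g2\<in>\<G>. \<exists>Ms N. Ms \<subseteq> X' - {xi} \<and> N \<subseteq> X' - {xi, xj} \<and>
            indep_rv M (resid Xv xi g1 Ms) (resid Xv xj g2 N))))"

definition fact_F2 :: "'a measure \<Rightarrow> 'v set \<Rightarrow> ('v \<times> 'v) set \<Rightarrow> ('v \<Rightarrow> 'a \<Rightarrow> real)
     \<Rightarrow> ('v \<Rightarrow> real \<Rightarrow> real) set \<Rightarrow> bool" where
  "fact_F2 M X E Xv \<G> \<longleftrightarrow>
    (\<forall>X' \<subseteq> X. \<forall>xi\<in>X'. \<forall>xj\<in>X'. xi \<noteq> xj \<longrightarrow>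
      (visible_non_edge E X' xi xj \<longleftrightarrow>
        (\<exists>g1\<in>\<G>. \<exists>g2\<in>\<G>. \<exists>Ms N. Ms \<subseteq> X' - {xi, xj} \<and> N \<subseteq> X' - {xi, xj} \<and>
            indep_rv M (resid Xv xi g1 Ms) (resid Xv xj g2 N))))"

definition fact_F3 :: "'a measure \<Rightarrow> 'v set \<Rightarrow> ('v \<times> 'v) set \<Rightarrow> ('v \<Rightarrow> 'a \<Rightarrow> real)
     \<Rightarrow> ('v \<Rightarrow> real \<Rightarrow> real) set \<Rightarrow> bool" where
  "fact_F3 M X E Xv \<G> \<longleftrightarrow>
    (\<forall>X' \<subseteq> X. \<forall>xi\<in>X'. \<forall>xj\<in>X'. xi \<noteq> xj \<longrightarrow>
      (invisible E X' xi xj \<longleftrightarrow>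
        (\<forall>g1\<in>\<G>. \<forall>g2\<in>\<G>. \<forall>Ms N. Ms \<subseteq> X' - {xi} \<longrightarrow> N \<subseteq> X' - {xj} \<longrightarrow>
            \<not> indep_rv M (resid Xv xi g1 Ms) (resid Xv xj g2 N))))"

end

theory Submission
  imports Defs
begin

text \<open>Condition (d) is an independence of residuals whose regressor sets avoid x_i and x_j,
  so F2 makes (x_i, x_j) a visible non-edge. For k in K, condition (a) is exactly the
  dependence pattern of F3 on the observed set X - {k}, so (x_i, x_j) is invisible there.
  An unobserved causal or backdoor path w.r.t. X - {k} that is not one w.r.t. X must enter
  an endpoint through k, hence k is a parent of x_i or of x_j. The model assumptions enter only through F2 and F3.\<close>

lemma dpath_penultimate_edge:
  assumes "dpath E p" "2 \<le> length p"
  shows "(p ! (length p - 2), last p) \<in> E"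
proof -
  have "(p ! (length p - 2), p ! Suc (length p - 2)) \<in> E"
    using assms unfolding dpath_def by simp
  moreover have "Suc (length p - 2) = length p - 1" using assms(2) by simp
  moreover have "last p = p ! (length p - 1)"
    using assms unfolding dpath_def by (simp add: last_conv_nth)
  ultimately show ?thesis by simp
qed

lemma UCP_hidden_parent:
  assumes "UCP E X' a b" "\<not> UCP E X a b"
  shows "\<exists>k\<in>X - X'. (k, b) \<in> E"
proof -
  obtain p where p: "dpath E p" "hd p = a" "last p = b" "2 \<le> length p"
      "p ! (length p - 2) \<notin> X'"
    using assms(1) unfolding UCP_def by blast
  then have "p ! (length p - 2) \<in> X" using assms(2) unfolding UCP_def by blast
  with p dpath_penultimate_edge[OF p(1,4)] show ?thesis by auto
qed

lemma UBP_hidden_parent: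
  assumes "UBP E X' a b" "\<not> UBP E X a b"
  shows "\<exists>k\<in>X - X'. (k, a) \<in> E \<or> (k, b) \<in> E"
proof -
  obtain p q where pq: "dpath E p" "dpath E q" "hd p = hd q"
      "last p = a" "last q = b" "2 \<le> length p" "2 \<le> length q" "set p \<inter> set q = {hd p}"
      "p ! (length p - 2) \<notin> X'" "q ! (length q - 2) \<notin> X'"
    using assms(1) unfolding UBP_def by blast
  then have "p ! (length p - 2) \<in> X \<or> q ! (length q - 2) \<in> X"
    using assms(2) unfolding UBP_def by blast
  with pq dpath_penultimate_edge[OF pq(1,6)] dpath_penultimate_edge[OF pq(2,7)]
  show ?thesis by auto
qed

lemma invisible_hidden_parent:
  assumes "invisible E X' a b" "\<not> invisible E X a b"
  shows "\<exists>k\<in>X - X'. (k, a) \<in> E \<or> (k, b) \<in> E"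
  using assms UCP_hidden_parent[of E X' a b X] UCP_hidden_parent[of E X' b a X]
    UBP_hidden_parent[of E X' a b X] UBP_hidden_parent[of E X' b a X]
  unfolding invisible_def by blast

lemma invisible_remove_vertex_parent:
  assumes "invisible E (X - {k}) a b" "\<not> invisible E X a b"
  shows "(k, a) \<in> E \<or> (k, b) \<in> E"
  using invisible_hidden_parent[OF assms] by auto

lemma visible_non_edge_if_indep:
  assumes "fact_F2 M X E Xv \<G>" "xi \<in> X" "xj \<in> X" "xi \<noteq> xj"
    and "g1 \<in> \<G>" "g2 \<in> \<G>" "Ms \<subseteq> X - {xi, xj}" "N \<subseteq> X - {xi, xj}"
    and "indep_rv M (resid Xv xi g1 Ms) (resid Xv xj g2 N)"
  shows "visible_non_edge E X xi xj"
  using assms unfolding fact_F2_def by blast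

lemma invisible_if_always_dependent:
  assumes "fact_F3 M X E Xv \<G>" "X' \<subseteq> X" "xi \<in> X'" "xj \<in> X'" "xi \<noteq> xj"
    and "\<forall>g1\<in>\<G>. \<forall>g2\<in>\<G>. \<forall>Ms N. Ms \<subseteq> X' - {xi} \<longrightarrow> N \<subseteq> X' - {xj} \<longrightarrow>
           \<not> indep_rv M (resid Xv xi g1 Ms) (resid Xv xj g2 N)"
  shows "invisible E X' xi xj"
  using assms unfolding fact_F3_def by blast

theorem lemma6:
  fixes M :: "'a measure" and V X :: "'v set" and E :: "('v \<times> 'v) set"
    and Xv nz :: "'v \<Rightarrow> 'a \<Rightarrow> real" and f :: "'v \<Rightarrow> 'v \<Rightarrow> real \<Rightarrow> real"
    and \<G> :: "('v \<Rightarrow> real \<Rightarrow> real) set"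
    and xi xj :: 'v and K :: "'v set"
  assumes dag: "is_dag V E"
    and obs: "X \<subseteq> V"
    and sem: "additive_sem M V E Xv nz f"
    and cfc: "CFC M V E Xv"
    and cls: "gam_class M V X Xv nz \<G>"
    and F1: "fact_F1 M X E Xv \<G>"
    and F2: "fact_F2 M X E Xv \<G>"
    and F3: "fact_F3 M X E Xv \<G>"
    and xi: "xi \<in> X" and xj: "xj \<in> X" and ij: "xi \<noteq> xj"
    and K: "K \<subseteq> X" "K \<noteq> {}" "xi \<notin> K" "xj \<notin> K"
    and a: "\<forall>k\<in>K. \<forall>Ms N. \<forall>g1\<in>\<G>. \<forall>g2\<in>\<G>.
              Ms \<subseteq> X - {xi, k} \<longrightarrow> N \<subseteq> X - {xj, k} \<longrightarrow>
              \<not> indep_rv M (resid Xv xi g1 Ms) (resid Xv xj g2 N)"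
    and d: "\<exists>Q1 Q2 g1 g2 Ms N. Q1 \<subseteq> K \<and> Q2 \<subseteq> K \<and> Q1 \<union> Q2 = K \<and> g1 \<in> \<G> \<and> g2 \<in> \<G> \<and>
              Ms \<subseteq> X - ({xi, xj} \<union> K) \<and> N \<subseteq> X - ({xi, xj} \<union> K) \<and>
              indep_rv M (resid Xv xi g1 (Ms \<union> Q1)) (resid Xv xj g2 (N \<union> Q2))"
  shows "visible_non_edge E X xi xj \<and> (\<forall>k\<in>K. (k, xi) \<in> E \<or> (k, xj) \<in> E)"
proof -
  obtain Q1 Q2 g1 g2 Ms N where "Q1 \<subseteq> K" "Q2 \<subseteq> K" "g1 \<in> \<G>" "g2 \<in> \<G>"
      "Ms \<subseteq> X - ({xi, xj} \<union> K)" "N \<subseteq> X - ({xi, xj} \<union> K)"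
      "indep_rv M (resid Xv xi g1 (Ms \<union> Q1)) (resid Xv xj g2 (N \<union> Q2))"
    using d by blast
  moreover have "Ms \<union> Q1 \<subseteq> X - {xi, xj}" "N \<union> Q2 \<subseteq> X - {xi, xj}"
    using calculation K by auto
  ultimately have vne: "visible_non_edge E X xi xj"
    using visible_non_edge_if_indep[OF F2 xi xj ij] by blast
  have "(k, xi) \<in> E \<or> (k, xj) \<in> E" if k: "k \<in> K" for k
  proof -
    have "invisible E (X - {k}) xi xj"
      using k K xi xj a
      by (intro invisible_if_always_dependent[OF F3 _ _ _ ij]) (auto, blast+)
    moreover have "\<not> invisible E X xi xj" using vne unfolding visible_non_edge_def by blast
    ultimately show ?thesis by (rule invisible_remove_vertex_parent)
  qed
  with vne show ?thesis by blast
qed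

end
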